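(* Let $\mathcal{X}\subseteq\mathbb{R}^n$ be compact. The following are equivalent: (i) $\mathcal{X}$ is standard comonotone; (ii) for all $v\in\mathbb{R}^n$ and all $i,j\in[n]$, there exists $x^*\in\arg\max\{v^\top x: x\in\mathcal{X}\}$ with $(v_i-v_j)(x^*_i-x^*_j)\ge0$; (iii) for all $v\in\mathbb{R}^n$, every $x^*\in\arg\max\{v^\top x: x\in\mathcal{X}\}$ and all $i,j\in[n]$ satisfy $(v_i-v_j)(x^*_i-x^*_j)\ge0$; (iv) for all $v\in\mathbb{R}^n$ and all $i,j\in[n]$ with $v_i=v_j$, there exist $\bar x,\tilde x\in\arg\max\{v^\top x: x\in\mathcal{X}\}$ with $\bar x_i\ge\bar x_j$ and $\tilde x_i\le\tilde x_j$.
   Context: $\Pi_n$ is the set of permutations of $[n]$; for $\pi\in\Pi_n$, $\mathcal{Z}(\pi)=\{x\in\mathbb{R}^n: x_{\pi(1)}\ge\cdots\ge x_{\pi(n)}\}$. A set $\mathcal{X}\subseteq\mathbb{R}^n$ is standard comonotone if for every $\pi\in\Pi_n$ and every $v\in\mathcal{Z}(\pi)$, whenever $\max_{x\in\mathcal{X}}v^\top x$ attains its optimum, it has an optimal solution in $\mathcal{Z}(\pi)$. *)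

theory Defs
  imports "HOL-Analysis.Analysis"
begin

text \<open>Vectors in R^n are modelled as real^'n; positions 1..n correspond to 0..<CARD('n).
  A permutation of [n] is a bijection from positions onto the index type.\<close>

definition is_perm :: "(nat \<Rightarrow> 'n::finite) \<Rightarrow> bool" where
  "is_perm \<pi> \<longleftrightarrow> bij_betw \<pi> {..<CARD('n)} (UNIV :: 'n set)"

definition Zcone :: "(nat \<Rightarrow> 'n::finite) \<Rightarrow> (real^'n) set" where
  "Zcone \<pi> = {x. \<forall>k l. k \<le> l \<and> l < CARD('n) \<longrightarrow> x $ (\<pi> l) \<le> x $ (\<pi> k)}"

definition argmax_lin :: "(real^'n) set \<Rightarrow> real^'n \<Rightarrow> (real^'n) set" where
  "argmax_lin X v = {x \<in> X. \<forall>y\<in>X. v \<bullet> y \<le> v \<bullet> x}"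

definition standard_comonotone :: "(real^'n::finite) set \<Rightarrow> bool" where
  "standard_comonotone X \<longleftrightarrow>
     (\<forall>\<pi> v. is_perm \<pi> \<and> v \<in> Zcone \<pi> \<and> argmax_lin X v \<noteq> {} \<longrightarrow>
        argmax_lin X v \<inter> Zcone \<pi> \<noteq> {})"

end

theory Submission
  imports Defs
begin

text \<open>Maximizers of linear objectives are monotone: if \<open>x\<close> maximizes \<open>v\<close> and \<open>y\<close> maximizes \<open>w\<close>,
  then \<open>(v - w) \<bullet> (x - y) \<ge> 0\<close>. Taking \<open>w = v - t (e\<^sub>i - e\<^sub>j)\<close> with \<open>t > 0\<close>, every maximizer
  \<open>x\<close> of \<open>v\<close> has \<open>x\<^sub>i \<ge> x\<^sub>j\<close> as soon as some maximizer \<open>y\<close> of \<open>w\<close> has \<open>y\<^sub>i \<ge> y\<^sub>j\<close>.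
  If \<open>v\<^sub>i > v\<^sub>j\<close>, the shift \<open>t\<close> can be chosen so that \<open>w\<^sub>i > w\<^sub>j\<close> or so that \<open>w\<^sub>i = w\<^sub>j\<close>;
  this is how (ii) and (iv) each imply (iii).
  Conversely, under (iii) the maximizers of vectors strictly sorted by \<open>\<pi>\<close> lie in \<open>Z(\<pi>)\<close>;
  perturbing \<open>v \<in> Z(\<pi>)\<close> into such vectors and passing to a limit (compactness of \<open>X\<close>,
  closedness of \<open>Z(\<pi>)\<close>) gives standard comonotonicity. Finally, standard comonotonicity
  gives (ii) and (iv) because for \<open>v\<^sub>i \<ge> v\<^sub>j\<close> some permutation sorting \<open>v\<close> places \<open>i\<close> before \<open>j\<close>.\<close>

lemma argmax_lin_nonempty:
  fixes X :: "(real^'n::finite) set"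
  assumes "compact X" "X \<noteq> {}"
  shows "argmax_lin X v \<noteq> {}"
proof -
  have "continuous_on X ((\<bullet>) v)"
    by (intro continuous_intros)
  then obtain x where "x \<in> X" "\<forall>y\<in>X. v \<bullet> y \<le> v \<bullet> x"
    using continuous_attains_sup[OF assms] by blast
  then show ?thesis unfolding argmax_lin_def by blast
qed

lemma argmax_lin_monotone:
  assumes "x \<in> argmax_lin X v" "y \<in> argmax_lin X w"
  shows "0 \<le> (v - w) \<bullet> (x - y)"
proof -
  have "v \<bullet> y \<le> v \<bullet> x" "w \<bullet> x \<le> w \<bullet> y"
    using assms unfolding argmax_lin_def by auto
  then show ?thesis by (simp add: inner_diff_left inner_diff_right)
qed

lemma inner_axis_diff:
  fixes z :: "real^'n::finite"
  shows "(axis i 1 - axis j 1) \<bullet> z = z$i - z$j"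
  by (simp add: inner_diff_left inner_axis' algebra_simps)

lemma axis_diff_nth:
  fixes v :: "real^'n::finite"
  assumes "i \<noteq> j"
  shows "(v - t *\<^sub>R (axis i 1 - axis j 1))$i = v$i - t"
    and "(v - t *\<^sub>R (axis i 1 - axis j 1))$j = v$j + t"
  using assms by (auto simp: axis_def)

lemma argmax_lin_order_from_shift:
  fixes X :: "(real^'n::finite) set"
  assumes x: "x \<in> argmax_lin X v"
    and y: "y \<in> argmax_lin X (v - t *\<^sub>R (axis i 1 - axis j 1))"
    and "t > 0" "y$j \<le> y$i"
  shows "x$j \<le> x$i"
proof -
  have "0 \<le> t * ((x - y)$i - (x - y)$j)"
    using argmax_lin_monotone[OF x y] by (simp add: inner_axis_diff)
  then show ?thesis using assms(3,4) by (simp add: zero_le_mult_iff)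
qed

lemma sign_consistent_if_strictly_ordered:
  fixes a b c d :: real
  assumes "b < a \<Longrightarrow> d \<le> c" "a < b \<Longrightarrow> c \<le> d"
  shows "0 \<le> (a - b) * (c - d)"
  using assms by (cases a b rule: linorder_cases) (auto simp: mult_nonpos_nonpos)

lemma argmax_lin_sign_consistent_if_shifts:
  fixes X :: "(real^'n::finite) set"
  assumes shift: "\<And>v i j. v$j < v$i \<Longrightarrow>
      \<exists>t>0. \<exists>y\<in>argmax_lin X (v - t *\<^sub>R (axis i 1 - axis j 1)). y$j \<le> y$i"
    and x: "x \<in> argmax_lin X v"
  shows "0 \<le> (v$i - v$j) * (x$i - x$j)"
proof -
  have "x$l \<le> x$k" if "v$l < v$k" for k l
    using shift[OF that] argmax_lin_order_from_shift[OF x] by blast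
  then show ?thesis by (intro sign_consistent_if_strictly_ordered)
qed

lemma argmax_lin_sign_consistent_if_exists:
  fixes X :: "(real^'n::finite) set"
  assumes "\<And>v i j. \<exists>y\<in>argmax_lin X v. 0 \<le> (v$i - v$j) * (y$i - y$j)"
    and "x \<in> argmax_lin X v"
  shows "0 \<le> (v$i - v$j) * (x$i - x$j)"
proof (rule argmax_lin_sign_consistent_if_shifts[OF _ assms(2)])
  fix v :: "real^'n" and i j assume ij: "v$j < v$i"
  define t where "t = (v$i - v$j) / 4"
  define w where "w = v - t *\<^sub>R (axis i 1 - axis j 1)"
  have "t > 0" "i \<noteq> j"
    using ij unfolding t_def by auto
  then have "w$j < w$i"
    using ij unfolding w_def axis_diff_nth[OF \<open>i \<noteq> j\<close>] t_def by (simp add: field_simps)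
  moreover obtain y where "y \<in> argmax_lin X w" "0 \<le> (w$i - w$j) * (y$i - y$j)"
    using assms(1) by blast
  ultimately show "\<exists>t>0. \<exists>y\<in>argmax_lin X (v - t *\<^sub>R (axis i 1 - axis j 1)). y$j \<le> y$i"
    using \<open>t > 0\<close> unfolding w_def by (auto simp: zero_le_mult_iff)
qed

lemma argmax_lin_sign_consistent_if_ties_ordered:
  fixes X :: "(real^'n::finite) set"
  assumes "\<And>v i j. v$i = v$j \<Longrightarrow> \<exists>y\<in>argmax_lin X v. y$j \<le> y$i"
    and "x \<in> argmax_lin X v"
  shows "0 \<le> (v$i - v$j) * (x$i - x$j)"
proof (rule argmax_lin_sign_consistent_if_shifts[OF _ assms(2)])
  fix v :: "real^'n" and i j assume ij: "v$j < v$i"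
  define t where "t = (v$i - v$j) / 2"
  have "t > 0" "i \<noteq> j"
    using ij unfolding t_def by auto
  then have "(v - t *\<^sub>R (axis i 1 - axis j 1))$i = (v - t *\<^sub>R (axis i 1 - axis j 1))$j"
    unfolding axis_diff_nth[OF \<open>i \<noteq> j\<close>] t_def by (simp add: field_simps)
  then show "\<exists>t>0. \<exists>y\<in>argmax_lin X (v - t *\<^sub>R (axis i 1 - axis j 1)). y$j \<le> y$i"
    using assms(1) \<open>t > 0\<close> by blast
qed

lemma perm_of_sorted_enumeration:
  fixes v :: "real^'n::finite"
  assumes L: "set L = UNIV" "distinct L" and sorted: "sorted (map (\<lambda>a. - v$a) L)"
  shows "is_perm ((!) L)" and "v \<in> Zcone ((!) L)"
proof -
  have len: "length L = CARD('n)"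
    using distinct_card[OF L(2)] L(1) by simp
  show "is_perm ((!) L)"
    unfolding is_perm_def by (rule bij_betw_nth) (use L len in auto)
  have "v $ (L!l) \<le> v $ (L!k)" if "k \<le> l" "l < CARD('n)" for k l
    using sorted_nth_mono[OF sorted, of k l] that len by simp
  then show "v \<in> Zcone ((!) L)"
    unfolding Zcone_def by blast
qed

lemma exists_sorting_perm:
  fixes v :: "real^'n::finite"
  obtains \<pi> where "is_perm \<pi>" "v \<in> Zcone \<pi>"
proof -
  obtain xs :: "'n list" where xs: "set xs = UNIV" "distinct xs"
    using finite_distinct_list[of "UNIV :: 'n set"] by auto
  let ?L = "sort_key (\<lambda>a. - v$a) xs"
  have "set ?L = UNIV" "distinct ?L" "sorted (map (\<lambda>a. - v$a) ?L)"
    using xs by auto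
  then show ?thesis
    using perm_of_sorted_enumeration that by blast
qed

lemma is_perm_comp_transpose:
  fixes \<pi> :: "nat \<Rightarrow> 'n::finite"
  assumes "is_perm \<pi>" "p < CARD('n)" "q < CARD('n)"
  shows "is_perm (\<pi> \<circ> Transposition.transpose p q)"
  using assms bij_betw_swap_iff[of p "{..<CARD('n)}" q \<pi>] unfolding is_perm_def by simp

lemma Zcone_comp_transpose_iff:
  assumes "v $ \<pi> p = v $ \<pi> q"
  shows "v \<in> Zcone (\<pi> \<circ> Transposition.transpose p q) \<longleftrightarrow> v \<in> Zcone \<pi>"
proof -
  have "v $ \<pi> (Transposition.transpose p q k) = v $ \<pi> k" for k
    using assms by (cases "k = p"; cases "k = q") auto
  then show ?thesis
    unfolding Zcone_def by simp
qed

lemma exists_sorting_perm_ordering_pair: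
  fixes v :: "real^'n::finite"
  assumes "v$j \<le> v$i"
  obtains \<pi> p q where "is_perm \<pi>" "v \<in> Zcone \<pi>" "p \<le> q" "q < CARD('n)" "\<pi> p = i" "\<pi> q = j"
proof -
  obtain \<pi> where \<pi>: "is_perm \<pi>" "v \<in> Zcone \<pi>"
    using exists_sorting_perm by blast
  then have "\<pi> ` {..<CARD('n)} = UNIV"
    unfolding is_perm_def bij_betw_def by blast
  then obtain p q where pq: "p < CARD('n)" "q < CARD('n)" "\<pi> p = i" "\<pi> q = j"
    by (metis UNIV_I imageE lessThan_iff)
  show ?thesis
  proof (cases "p \<le> q")
    case True
    then show ?thesis using that \<pi> pq by blast
  next
    case False
    \<comment> \<open>then \<open>v$i = v$j\<close>, so swapping the positions of \<open>i\<close> and \<open>j\<close> keeps \<open>v\<close> sorted\<close>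
    then have "v $ \<pi> p \<le> v $ \<pi> q"
      using \<pi>(2) pq(1) False unfolding Zcone_def by simp
    then have "v $ \<pi> q = v $ \<pi> p"
      using assms pq by simp
    then show ?thesis
      using that[of "\<pi> \<circ> Transposition.transpose q p" q p] False pq \<pi>
      by (simp add: is_perm_comp_transpose Zcone_comp_transpose_iff)
  qed
qed

lemma standard_comonotone_ordered_maximizer:
  fixes X :: "(real^'n::finite) set"
  assumes "standard_comonotone X" "argmax_lin X v \<noteq> {}" "v$j \<le> v$i"
  shows "\<exists>x\<in>argmax_lin X v. x$j \<le> x$i"
proof -
  obtain \<pi> p q where \<pi>: "is_perm \<pi>" "v \<in> Zcone \<pi>" "p \<le> q" "q < CARD('n)" "\<pi> p = i" "\<pi> q = j"
    using exists_sorting_perm_ordering_pair[OF assms(3)] by blast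
  then obtain x where "x \<in> argmax_lin X v" "x \<in> Zcone \<pi>"
    using assms(1,2) unfolding standard_comonotone_def by blast
  then show ?thesis
    using \<pi> unfolding Zcone_def by blast
qed

lemma sign_consistent_maximizer_if_ordered:
  fixes X :: "(real^'n::finite) set"
  assumes "\<And>v i j. v$j \<le> v$i \<Longrightarrow> \<exists>x\<in>argmax_lin X v. x$j \<le> x$i"
  shows "\<exists>x\<in>argmax_lin X v. 0 \<le> (v$i - v$j) * (x$i - x$j)"
proof (cases "v$j \<le> v$i")
  case True
  then show ?thesis using assms[of v j i] by (auto simp: zero_le_mult_iff)
next
  case False
  then show ?thesis using assms[of v i j] by (auto simp: zero_le_mult_iff)
qed

lemma closed_Zcone: "closed (Zcone (\<pi> :: nat \<Rightarrow> 'n::finite))"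
proof -
  have "closed {x :: real^'n. x $ \<pi> l \<le> x $ \<pi> k}" for k l
    by (intro closed_Collect_le continuous_intros)
  then show ?thesis
    unfolding Zcone_def by (intro closed_Collect_all) (simp add: closed_Collect_imp)
qed

lemma argmax_lin_limit:
  fixes X :: "(real^'n::finite) set"
  assumes "closed X" "w \<longlonglongrightarrow> v" "x \<longlonglongrightarrow> l" "\<And>m. x m \<in> argmax_lin X (w m)"
  shows "l \<in> argmax_lin X v"
  unfolding argmax_lin_def
proof (intro CollectI conjI ballI)
  show "l \<in> X"
    using assms unfolding argmax_lin_def by (auto intro: closed_sequentially)
next
  fix y assume "y \<in> X"
  then have "w m \<bullet> y \<le> w m \<bullet> x m" for m
    using assms(4) unfolding argmax_lin_def by blast
  moreover have "(\<lambda>m. w m \<bullet> y) \<longlonglongrightarrow> v \<bullet> y"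
    using assms(2) by (intro tendsto_intros)
  moreover have "(\<lambda>m. w m \<bullet> x m) \<longlonglongrightarrow> v \<bullet> l"
    using assms(2,3) by (intro tendsto_intros)
  ultimately show "v \<bullet> y \<le> v \<bullet> l"
    by (intro LIMSEQ_le) auto
qed

lemma sign_consistent_in_Zcone:
  fixes w x :: "real^'n::finite"
  assumes "\<And>i j. 0 \<le> (w$i - w$j) * (x$i - x$j)"
    and "\<And>k l. k < l \<Longrightarrow> l < CARD('n) \<Longrightarrow> w $ \<pi> l < w $ \<pi> k"
  shows "x \<in> Zcone \<pi>"
proof -
  have "x $ \<pi> l \<le> x $ \<pi> k" if "k < l" "l < CARD('n)" for k l
    using assms(1)[of "\<pi> k" "\<pi> l"] assms(2)[OF that] by (simp add: zero_le_mult_iff)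
  then show ?thesis
    unfolding Zcone_def by (auto simp: le_less)
qed

lemma exists_strictly_sorted_by_perm:
  assumes "is_perm (\<pi> :: nat \<Rightarrow> 'n::finite)"
  obtains u :: "real^'n" where "\<And>k l. k < l \<Longrightarrow> l < CARD('n) \<Longrightarrow> u $ \<pi> l < u $ \<pi> k"
proof
  fix k l assume "k < l" "l < CARD('n)"
  moreover have "inj_on \<pi> {..<CARD('n)}"
    using assms unfolding is_perm_def bij_betw_def by blast
  ultimately show "(\<chi> a. - real (inv_into {..<CARD('n)} \<pi> a)) $ \<pi> l
      < (\<chi> a. - real (inv_into {..<CARD('n)} \<pi> a)) $ \<pi> k"
    by simp
qed

lemma standard_comonotone_if_sign_consistent:
  fixes X :: "(real^'n::finite) set"
  assumes X: "compact X" "X \<noteq> {}"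
    and sign: "\<And>v x i j. x \<in> argmax_lin X v \<Longrightarrow> 0 \<le> (v$i - v$j) * (x$i - x$j)"
  shows "standard_comonotone X"
  unfolding standard_comonotone_def
proof (intro allI impI, elim conjE)
  fix \<pi> :: "nat \<Rightarrow> 'n" and v
  assume \<pi>: "is_perm \<pi>" and v: "v \<in> Zcone \<pi>"
  obtain u :: "real^'n" where u: "\<And>k l. k < l \<Longrightarrow> l < CARD('n) \<Longrightarrow> u $ \<pi> l < u $ \<pi> k"
    using exists_strictly_sorted_by_perm[OF \<pi>] by blast
  define w where "w m = v + inverse (real (Suc m)) *\<^sub>R u" for m
  have "\<forall>m. \<exists>x. x \<in> argmax_lin X (w m)"
    using argmax_lin_nonempty[OF X] by blast
  then obtain x where x: "\<And>m. x m \<in> argmax_lin X (w m)"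
    by metis
  have x_Zcone: "x m \<in> Zcone \<pi>" for m
  proof (rule sign_consistent_in_Zcone)
    show "0 \<le> (w m $ i - w m $ j) * (x m $ i - x m $ j)" for i j
      using sign[OF x] .
    fix k l assume "k < l" "l < CARD('n)"
    then have "v $ \<pi> l \<le> v $ \<pi> k" "u $ \<pi> l < u $ \<pi> k"
      using v u unfolding Zcone_def by auto
    then show "w m $ \<pi> l < w m $ \<pi> k"
      by (simp add: w_def add_le_less_mono)
  qed
  have "x m \<in> X" for m
    using x unfolding argmax_lin_def by blast
  then obtain l r where r: "strict_mono r" and lim: "(x \<circ> r) \<longlonglongrightarrow> l"
    using compact_imp_seq_compact[OF X(1)] unfolding seq_compact_def by metis
  have "w \<longlonglongrightarrow> v + 0 *\<^sub>R u"
    unfolding w_def by (intro tendsto_intros LIMSEQ_inverse_real_of_nat)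
  then have "(w \<circ> r) \<longlonglongrightarrow> v"
    using LIMSEQ_subseq_LIMSEQ[OF _ r] by simp
  then have "l \<in> argmax_lin X v"
    by (rule argmax_lin_limit[OF compact_imp_closed[OF X(1)] _ lim]) (simp add: x)
  moreover have "l \<in> Zcone \<pi>"
    by (rule closed_sequentially[OF closed_Zcone _ lim]) (simp add: x_Zcone)
  ultimately show "argmax_lin X v \<inter> Zcone \<pi> \<noteq> {}"
    by blast
qed

theorem theorem2:
  fixes X :: "(real^'n::finite) set"
  assumes "compact X" and "X \<noteq> {}"
  shows "(standard_comonotone X
            \<longleftrightarrow> (\<forall>v i j. \<exists>x\<in>argmax_lin X v. (v$i - v$j) * (x$i - x$j) \<ge> 0))
       \<and> (standard_comonotone X
            \<longleftrightarrow> (\<forall>v. \<forall>x\<in>argmax_lin X v. \<forall>i j. (v$i - v$j) * (x$i - x$j) \<ge> 0))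
       \<and> (standard_comonotone X
            \<longleftrightarrow> (\<forall>v i j. v$i = v$j \<longrightarrow>
                   (\<exists>xb\<in>argmax_lin X v. \<exists>xt\<in>argmax_lin X v. xb$i \<ge> xb$j \<and> xt$i \<le> xt$j)))"
  (is "(?S \<longleftrightarrow> ?P2) \<and> (?S \<longleftrightarrow> ?P3) \<and> (?S \<longleftrightarrow> ?P4)")
proof -
  have ordered: "\<exists>x\<in>argmax_lin X v. x$j \<le> x$i" if ?S "v$j \<le> v$i" for v i j
    using standard_comonotone_ordered_maximizer[OF that(1) argmax_lin_nonempty[OF assms] that(2)] .
  have "?S \<Longrightarrow> ?P2"
    using ordered sign_consistent_maximizer_if_ordered by blast
  moreover have "?S \<Longrightarrow> ?P4"
    using ordered by (metis order.refl)
  moreover have "?P2 \<Longrightarrow> ?P3"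
    using argmax_lin_sign_consistent_if_exists by blast
  moreover have "?P4 \<Longrightarrow> ?P3"
    using argmax_lin_sign_consistent_if_ties_ordered by blast
  moreover have "?P3 \<Longrightarrow> ?S"
    using standard_comonotone_if_sign_consistent[OF assms] by blast
  moreover have "?P3 \<Longrightarrow> ?P2"
    using argmax_lin_nonempty[OF assms] by blast
  ultimately show ?thesis
    by blast
qed

end
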